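(* Let $\mathcal M=(\mathbf M^{(\lambda)})_{\lambda>0}$ be a weight matrix on $\mathbb N_0^d$. (i) If (R1): for every $\lambda>0$ there exist $\kappa\ge\lambda$, $B,C,H>0$ with $\alpha^{\alpha/2}M^{(\lambda)}_\beta\le BC^{|\alpha|}H^{|\alpha+\beta|}M^{(\kappa)}_{\alpha+\beta}$ for all $\alpha,\beta\in\mathbb N_0^d$, and (R2): for every $\lambda>0$ there exist $\kappa\ge\lambda$, $A\ge1$ with $M^{(\lambda)}_{\alpha+e_j}\le A^{|\alpha|+1}M^{(\kappa)}_\alpha$ for all $\alpha$ and $1\le j\le d$, then $H_\gamma\in\mathcal S_{\{\mathcal M\}}$ for all $\gamma\in\mathbb N_0^d$. (ii) If (B1): for every $\lambda>0$ there exist $0<\kappa\le\lambda$, $H>0$ such that for every $C>0$ there is $B>0$ with $\alpha^{\alpha/2}M^{(\kappa)}_\beta\le BC^{|\alpha|}H^{|\alpha+\beta|}M^{(\lambda)}_{\alpha+\beta}$ for all $\alpha,\beta$, and (B2): for every $\lambda>0$ there exist $0<\kappa\le\lambda$, $A\ge1$ with $M^{(\kappa)}_{\alpha+e_j}\le A^{|\alpha|+1}M^{(\lambda)}_\alpha$ for all $\alpha$ and $1\le j\le d$, then $H_\gamma\in\mathcal S_{(\mathcal M)}$ for all $\gamma\in\mathbb N_0^d$.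
   Context: A weight matrix is a family $\mathcal M=(\mathbf M^{(\lambda)})_{\lambda>0}$ with $\mathbf M^{(\lambda)}=(M^{(\lambda)}_\alpha)_{\alpha\in\mathbb N_0^d}$ sequences of positive reals, $M^{(\lambda)}_0=1$, and $M^{(\lambda)}_\alpha\le M^{(\kappa)}_\alpha$ for all $\alpha$ whenever $0<\lambda\le\kappa$. Notation: $|\alpha|=\sum\alpha_j$, $e_j$ the $j$-th unit vector, $\alpha^{\alpha/2}=\prod_j\alpha_j^{\alpha_j/2}$ with $0^0=1$. $\|f\|_{\infty,\mathbf M,h}:=\sup_{\alpha,\beta}\frac{\|x^\alpha\partial^\beta f\|_\infty}{h^{|\alpha+\beta|}M_{\alpha+\beta}}$; $\mathcal S_{\{\mathcal M\}}$ ($\mathcal S_{(\mathcal M)}$) is the set of $f\in C^\infty(\mathbb R^d)$ with $\|f\|_{\infty,\mathbf M^{(\lambda)},h}<\infty$ for some (for all) $\lambda,h>0$. Hermite functions: $H_\gamma(x)=(2^{|\gamma|}\gamma!\pi^{d/2})^{-1/2}h_\gamma(x)e^{-|x|^2/2}$, $h_\gamma(x)=(-1)^{|\gamma|}e^{|x|^2}\partial^\gamma e^{-|x|^2}$. *)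

theory Defs
  imports "HOL-Analysis.Analysis"
begin

text \<open>Multi-indices on the index type 'd (so that d = CARD('d)) are functions 'd \<Rightarrow> nat.\<close>

definition mi_abs :: "('d::finite \<Rightarrow> nat) \<Rightarrow> nat" where
  "mi_abs \<alpha> = (\<Sum>j\<in>UNIV. \<alpha> j)"

definition mi_add :: "('d \<Rightarrow> nat) \<Rightarrow> ('d \<Rightarrow> nat) \<Rightarrow> ('d \<Rightarrow> nat)" where
  "mi_add \<alpha> \<beta> = (\<lambda>j. \<alpha> j + \<beta> j)"

definition mi_unit :: "'d \<Rightarrow> ('d \<Rightarrow> nat)" where
  "mi_unit j = (\<lambda>i. if i = j then 1 else 0)"

definition mi_zero :: "'d \<Rightarrow> nat" where
  "mi_zero = (\<lambda>_. 0)"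

definition mi_fact :: "('d::finite \<Rightarrow> nat) \<Rightarrow> real" where
  "mi_fact \<alpha> = (\<Prod>j\<in>UNIV. fact (\<alpha> j))"

text \<open>alpha^(alpha/2) = prod_j alpha_j^(alpha_j/2), with 0^0 = 1.\<close>
definition mi_halfpow :: "('d::finite \<Rightarrow> nat) \<Rightarrow> real" where
  "mi_halfpow \<alpha> = (\<Prod>j\<in>UNIV. sqrt (real (\<alpha> j) ^ \<alpha> j))"

definition monom_pow :: "real^'d \<Rightarrow> ('d::finite \<Rightarrow> nat) \<Rightarrow> real" where
  "monom_pow x \<alpha> = (\<Prod>j\<in>UNIV. (x $ j) ^ \<alpha> j)"

definition partial :: "'d::finite \<Rightarrow> (real^'d \<Rightarrow> real) \<Rightarrow> real^'d \<Rightarrow> real" where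
  "partial j f x = deriv (\<lambda>t. f (x + t *\<^sub>R axis j 1)) 0"

fun iter_partial :: "'d::finite list \<Rightarrow> (real^'d \<Rightarrow> real) \<Rightarrow> real^'d \<Rightarrow> real" where
  "iter_partial [] f = f"
| "iter_partial (j # js) f = partial j (iter_partial js f)"

definition smooth_fun :: "(real^'d::finite \<Rightarrow> real) \<Rightarrow> bool" where
  "smooth_fun f \<longleftrightarrow> (\<forall>js. continuous_on UNIV (iter_partial js f) \<and>
      (\<forall>j x. (\<lambda>t. iter_partial js f (x + t *\<^sub>R axis j 1)) differentiable (at 0)))"

text \<open>partial^beta f: differentiate beta_j times in direction j (order irrelevant for smooth f).\<close>
definition mi_partial :: "('d::finite \<Rightarrow> nat) \<Rightarrow> (real^'d \<Rightarrow> real) \<Rightarrow> real^'d \<Rightarrow> real" where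
  "mi_partial \<beta> f = iter_partial (SOME js. \<forall>j. count_list js j = \<beta> j) f"

definition hermite_poly :: "('d::finite \<Rightarrow> nat) \<Rightarrow> real^'d \<Rightarrow> real" where
  "hermite_poly \<gamma> x = (-1) ^ mi_abs \<gamma> * exp ((norm x)\<^sup>2) *
      mi_partial \<gamma> (\<lambda>y. exp (- (norm y)\<^sup>2)) x"

definition hermite_fun :: "('d::finite \<Rightarrow> nat) \<Rightarrow> real^'d \<Rightarrow> real" where
  "hermite_fun \<gamma> x = (2 ^ mi_abs \<gamma> * mi_fact \<gamma> * pi powr (real CARD('d) / 2)) powr (-1/2)
      * hermite_poly \<gamma> x * exp (- (norm x)\<^sup>2 / 2)"

text \<open>Weight matrix: M \<lambda> \<alpha> = M^(\<lambda>)_\<alpha>, \<lambda> > 0.\<close>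
definition weight_matrix :: "(real \<Rightarrow> ('d \<Rightarrow> nat) \<Rightarrow> real) \<Rightarrow> bool" where
  "weight_matrix M \<longleftrightarrow>
     (\<forall>lam>0. (\<forall>\<alpha>. M lam \<alpha> > 0) \<and> M lam mi_zero = 1) \<and>
     (\<forall>lam kap \<alpha>. 0 < lam \<longrightarrow> lam \<le> kap \<longrightarrow> M lam \<alpha> \<le> M kap \<alpha>)"

definition norm_finite :: "(('d::finite \<Rightarrow> nat) \<Rightarrow> real) \<Rightarrow> real \<Rightarrow> (real^'d \<Rightarrow> real) \<Rightarrow> bool" where
  "norm_finite Mseq h f \<longleftrightarrow> (\<exists>K. \<forall>\<alpha> \<beta> x.
      \<bar>monom_pow x \<alpha> * mi_partial \<beta> f x\<bar> / (h ^ mi_abs (mi_add \<alpha> \<beta>) * Mseq (mi_add \<alpha> \<beta>)) \<le> K)"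

definition S_roumieu :: "(real \<Rightarrow> ('d::finite \<Rightarrow> nat) \<Rightarrow> real) \<Rightarrow> (real^'d \<Rightarrow> real) set" where
  "S_roumieu M = {f. smooth_fun f \<and> (\<exists>lam>0. \<exists>h>0. norm_finite (M lam) h f)}"

definition S_beurling :: "(real \<Rightarrow> ('d::finite \<Rightarrow> nat) \<Rightarrow> real) \<Rightarrow> (real^'d \<Rightarrow> real) set" where
  "S_beurling M = {f. smooth_fun f \<and> (\<forall>lam>0. \<forall>h>0. norm_finite (M lam) h f)}"

end

theory Submission
  imports Defs "HOL-Computational_Algebra.Polynomial" "HOL-Library.Multiset"
begin

text \<open>
  The Gaussian exp(-|x|^2) splits over the coordinates, hence every Hermite function is a tensor
  product c * prod_j q_j(x_j) exp(-x_j^2/2) with polynomials q_j, and partial derivatives act on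
  it coordinatewise. In one variable the b-th derivative of q(t) exp(-t^2/2) is p(t) exp(-t^2/2)
  with p = (d/dt - t)^b q, whose m-th coefficient is at most |q|_1 2^b S^(deg q + b - m) as soon
  as S^2 >= deg q + b: the factor produced by differentiating t^(m+1) is absorbed by one power S^2.
  Together with |t|^k exp(-t^2/2) <= k^(k/2) this yields
  |t^a g^(b)(t)| <= K L^(a+b) (a+b)^((a+b)/2), and taking products,
  |x^alpha d^beta H_gamma(x)| <= K L^|alpha+beta| (alpha+beta)^((alpha+beta)/2).
  Condition (R1) resp. (B1) with beta = 0 bounds alpha^(alpha/2) by B h^|alpha| M_alpha for some
  resp. every h > 0, which is all that membership in the Roumieu resp. Beurling space needs.
\<close>

definition gauss_poly :: "real \<Rightarrow> real poly \<Rightarrow> real \<Rightarrow> real" where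
  "gauss_poly c p t = poly p t * exp (- (c * t\<^sup>2))"

definition gauss_pderiv :: "real \<Rightarrow> real poly \<Rightarrow> real poly" where
  "gauss_pderiv c p = pderiv p - smult (2 * c) (pCons 0 p)"

lemma has_real_derivative_gauss_poly:
  "(gauss_poly c p has_real_derivative gauss_poly c (gauss_pderiv c p) t) (at t)"
proof -
  have "(gauss_poly c p has_real_derivative
      poly (pderiv p) t * exp (- (c * t\<^sup>2))
        + poly p t * (exp (- (c * t\<^sup>2)) * (- (c * (2 * t))))) (at t)"
    unfolding gauss_poly_def [abs_def] by (auto intro!: derivative_eq_intros simp: power2_eq_square)
  then show ?thesis
    by (simp add: gauss_poly_def gauss_pderiv_def algebra_simps)
qed

lemma deriv_gauss_poly: "deriv (gauss_poly c p) = gauss_poly c (gauss_pderiv c p)"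
  using DERIV_imp_deriv has_real_derivative_gauss_poly by blast

lemma higher_deriv_gauss_poly:
  "(deriv ^^ n) (gauss_poly c p) = gauss_poly c ((gauss_pderiv c ^^ n) p)"
  by (induction n) (simp_all add: deriv_gauss_poly)

lemma degree_gauss_pderiv_iter: "degree ((gauss_pderiv c ^^ k) q) \<le> degree q + k"
proof (induction k)
  case (Suc k)
  let ?p = "(gauss_pderiv c ^^ k) q"
  have "degree (pderiv ?p) \<le> degree q + Suc k"
    and "degree (smult (2 * c) (pCons 0 ?p)) \<le> degree q + Suc k"
    using Suc degree_pderiv[of ?p] degree_pCons_le[of 0 ?p] by (auto intro: order.trans)
  then have "degree (gauss_pderiv c ?p) \<le> degree q + Suc k"
    unfolding gauss_pderiv_def by (rule degree_diff_le)
  then show ?case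
    by simp
qed simp

definition infinitely_differentiable :: "(real \<Rightarrow> real) \<Rightarrow> bool" where
  "infinitely_differentiable g \<longleftrightarrow>
     (\<forall>n t. ((deriv ^^ n) g has_real_derivative (deriv ^^ Suc n) g t) (at t))"

lemma infinitely_differentiable_has_real_derivative:
  assumes "infinitely_differentiable g"
  shows "(g has_real_derivative deriv g t) (at t)"
  using assms[unfolded infinitely_differentiable_def, rule_format, of 0 t] by simp

lemma infinitely_differentiable_higher_deriv:
  "infinitely_differentiable g \<Longrightarrow> infinitely_differentiable ((deriv ^^ k) g)"
  unfolding infinitely_differentiable_def by (metis funpow_add o_apply add_Suc)

lemma infinitely_differentiable_gauss_poly: "infinitely_differentiable (gauss_poly c p)"
  unfolding infinitely_differentiable_def higher_deriv_gauss_poly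
  by (simp add: has_real_derivative_gauss_poly)

definition tensor_prod :: "real \<Rightarrow> ('d::finite \<Rightarrow> real \<Rightarrow> real) \<Rightarrow> real^'d \<Rightarrow> real" where
  "tensor_prod c g x = c * (\<Prod>i\<in>UNIV. g i (x $ i))"

lemma tensor_prod_split:
  "tensor_prod c g x = c * (\<Prod>i\<in>UNIV - {j}. g i (x $ i)) * g j (x $ j)"
  unfolding tensor_prod_def by (simp add: prod.remove[of UNIV j] mult_ac)

lemma tensor_prod_along_axis:
  "tensor_prod c g (x + t *\<^sub>R axis j 1) = c * (\<Prod>i\<in>UNIV - {j}. g i (x $ i)) * g j (x $ j + t)"
  unfolding tensor_prod_split[of c g _ j] by (auto simp: axis_def intro!: prod.cong)

lemma tensor_prod_fun_upd:
  "tensor_prod c (g(j := h)) x = c * (\<Prod>i\<in>UNIV - {j}. g i (x $ i)) * h (x $ j)"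
  unfolding tensor_prod_split[of c _ _ j] by (auto intro!: prod.cong)

lemma has_real_derivative_tensor_prod_along_axis:
  assumes "(g j has_real_derivative D) (at (x $ j))"
  shows "((\<lambda>t. tensor_prod c g (x + t *\<^sub>R axis j 1)) has_real_derivative
           c * (\<Prod>i\<in>UNIV - {j}. g i (x $ i)) * D) (at 0)"
proof -
  have "((\<lambda>t. g j (x $ j + t)) has_real_derivative D) (at 0)"
    using DERIV_shift[of "g j" D 0 "x $ j"] assms by (simp add: add.commute)
  then show ?thesis
    unfolding tensor_prod_along_axis by (rule DERIV_cmult)
qed

lemma partial_tensor_prod:
  assumes "\<And>t. (g j has_real_derivative deriv (g j) t) (at t)"
  shows "partial j (tensor_prod c g) = tensor_prod c (g(j := deriv (g j)))"
  unfolding partial_def tensor_prod_fun_upd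
  by (intro ext DERIV_imp_deriv has_real_derivative_tensor_prod_along_axis assms)

lemma iter_partial_tensor_prod:
  assumes "\<And>i. infinitely_differentiable (g i)"
  shows "iter_partial js (tensor_prod c g) = tensor_prod c (\<lambda>i. (deriv ^^ count_list js i) (g i))"
proof (induction js)
  case (Cons j js)
  let ?g = "\<lambda>i. (deriv ^^ count_list js i) (g i)"
  have "\<And>t. (?g j has_real_derivative deriv (?g j) t) (at t)"
    by (intro infinitely_differentiable_has_real_derivative
        infinitely_differentiable_higher_deriv assms)
  then have "iter_partial (j # js) (tensor_prod c g) = tensor_prod c (?g(j := deriv (?g j)))"
    using Cons.IH by (simp add: partial_tensor_prod)
  also have "?g(j := deriv (?g j)) = (\<lambda>i. (deriv ^^ count_list (j # js) i) (g i))"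
    by (rule ext) simp
  finally show ?case .
qed simp

lemma ex_count_list_eq: "\<exists>js. \<forall>j. count_list js (j::'d::finite) = \<beta> j"
proof -
  obtain js where "mset js = Abs_multiset \<beta>"
    using ex_mset by blast
  then have "count_list js j = \<beta> j" for j
    by (simp flip: count_mset add: count_Abs_multiset)
  then show ?thesis
    by blast
qed

lemma mi_partial_tensor_prod:
  assumes "\<And>i. infinitely_differentiable (g i)"
  shows "mi_partial \<beta> (tensor_prod c g) = tensor_prod c (\<lambda>i. (deriv ^^ \<beta> i) (g i))"
proof -
  have "\<forall>j. count_list (SOME js. \<forall>j. count_list js j = \<beta> j) j = \<beta> j"
    using someI_ex[OF ex_count_list_eq] .
  then show ?thesis
    unfolding mi_partial_def iter_partial_tensor_prod[OF assms] by simp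
qed

lemma smooth_fun_tensor_prod:
  fixes g :: "'d::finite \<Rightarrow> real \<Rightarrow> real"
  assumes "\<And>i. infinitely_differentiable (g i)"
  shows "smooth_fun (tensor_prod c g)"
  unfolding smooth_fun_def iter_partial_tensor_prod[OF assms]
proof (intro allI conjI)
  fix js
  let ?g = "\<lambda>i. (deriv ^^ count_list js i) (g i)"
  have g: "\<And>i t. (?g i has_real_derivative deriv (?g i) t) (at t)"
    by (intro infinitely_differentiable_has_real_derivative
        infinitely_differentiable_higher_deriv assms)
  have "continuous_on UNIV (?g i)" for i
    by (rule continuous_at_imp_continuous_on) (meson g DERIV_isCont)
  then have "continuous_on UNIV (\<lambda>x::real^'d. ?g i (x $ i))" for i
    by (rule continuous_on_compose2) (auto intro: continuous_intros)
  then show "continuous_on UNIV (tensor_prod c ?g)"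
    unfolding tensor_prod_def [abs_def]
    by (intro continuous_on_mult continuous_on_const continuous_on_prod)
  show "(\<lambda>t. tensor_prod c ?g (x + t *\<^sub>R axis j 1)) differentiable (at 0)" for j x
    using has_real_derivative_tensor_prod_along_axis[where g = ?g and j = j and x = x, OF g]
    by (auto simp: real_differentiable_def)
qed

lemma abs_power_mult_gauss_le: "\<bar>t\<bar> ^ k * exp (- (1/2 * t\<^sup>2)) \<le> sqrt (real k) ^ k"
proof (rule power2_le_imp_le)
  have "(t\<^sup>2) ^ k \<le> real k ^ k * exp (t\<^sup>2)"
  proof (cases "k = 0")
    case False
    have "t\<^sup>2 / k \<le> exp (t\<^sup>2 / k)"
      using exp_ge_add_one_self[of "t\<^sup>2 / k"] by linarith
    then have "(t\<^sup>2 / k) ^ k \<le> exp (t\<^sup>2 / k) ^ k"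
      by (intro power_mono) auto
    also have "\<dots> = exp (t\<^sup>2)"
      using False by (simp flip: exp_of_nat_mult)
    finally show ?thesis
      using False by (simp add: power_divide field_simps)
  qed simp
  then have "(t\<^sup>2) ^ k * exp (- t\<^sup>2) \<le> real k ^ k"
    by (simp add: exp_minus field_simps)
  have "(\<bar>t\<bar> ^ k * exp (- (1/2 * t\<^sup>2)))\<^sup>2 = (t\<^sup>2) ^ k * exp (- t\<^sup>2)"
    by (simp add: power_mult_distrib power_even_abs mult.commute flip: power_mult exp_of_nat_mult)
  also have "\<dots> \<le> real k ^ k"
    by fact
  also have "\<dots> = (sqrt (real k) ^ k)\<^sup>2"
    by (metis power_mult mult.commute real_sqrt_pow2 of_nat_0_le_iff)
  finally show "(\<bar>t\<bar> ^ k * exp (- (1/2 * t\<^sup>2)))\<^sup>2 \<le> (sqrt (real k) ^ k)\<^sup>2" .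
qed simp

lemma abs_coeff_gauss_pderiv_half_le:
  fixes p :: "real poly"
  assumes "degree p \<le> N" "real N \<le> S\<^sup>2" "1 \<le> S" "\<And>m. \<bar>coeff p m\<bar> \<le> A * S ^ (N - m)"
  shows "\<bar>coeff (gauss_pderiv (1/2) p) m\<bar> \<le> 2 * A * S ^ (Suc N - m)"
proof -
  have "0 < S ^ N"
    using assms(3) by simp
  moreover have "0 \<le> A * S ^ N"
    using assms(4)[of 0] abs_ge_zero order_trans by fastforce
  ultimately have "0 \<le> A"
    by (simp add: zero_le_mult_iff)
  have "\<bar>real (Suc m) * coeff p (Suc m)\<bar> \<le> A * S ^ (Suc N - m)"
  proof (cases "Suc m \<le> N")
    case True
    have "\<bar>real (Suc m) * coeff p (Suc m)\<bar> \<le> S\<^sup>2 * (A * S ^ (N - Suc m))"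
      using True assms(2) assms(4)[of "Suc m"] by (simp add: abs_mult mult_mono)
    also have "\<dots> = A * S ^ (Suc N - m)"
      using True by (simp add: power_add [symmetric] Suc_diff_Suc Suc_diff_le)
    finally show ?thesis .
  next
    case False
    then have "coeff p (Suc m) = 0"
      using assms(1) by (intro coeff_eq_0) linarith
    then show ?thesis
      using \<open>0 \<le> A\<close> assms(3) by simp
  qed
  moreover have "\<bar>coeff (pCons 0 p) m\<bar> \<le> A * S ^ (Suc N - m)"
    using assms(4) \<open>0 \<le> A\<close> assms(3) by (cases m) auto
  ultimately show ?thesis
    unfolding gauss_pderiv_def by (simp add: coeff_pderiv)
qed

lemma abs_coeff_gauss_pderiv_half_iter_le:
  fixes q :: "real poly"
  assumes "1 \<le> S" "real (degree q + k) \<le> S\<^sup>2"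
  shows "\<bar>coeff ((gauss_pderiv (1/2) ^^ k) q) m\<bar>
           \<le> (\<Sum>i\<le>degree q. \<bar>coeff q i\<bar>) * 2 ^ k * S ^ (degree q + k - m)"
  using assms(2)
proof (induction k arbitrary: m)
  case 0
  show ?case
  proof (cases "m \<le> degree q")
    case True
    then have "\<bar>coeff q m\<bar> \<le> (\<Sum>i\<le>degree q. \<bar>coeff q i\<bar>)"
      by (intro member_le_sum) auto
    moreover have "1 \<le> S ^ (degree q - m)"
      using assms(1) by (rule one_le_power)
    ultimately show ?thesis
      using mult_left_mono[of 1 "S ^ (degree q - m)" "\<Sum>i\<le>degree q. \<bar>coeff q i\<bar>"]
      by (simp add: sum_nonneg)
  qed (simp add: coeff_eq_0 sum_nonneg)
next
  case (Suc k)
  then show ?case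
    using abs_coeff_gauss_pderiv_half_le[OF degree_gauss_pderiv_iter _ assms(1) Suc.IH]
    by (simp add: mult_ac)
qed

lemma sqrt_power_shift_le:
  "\<exists>K L. 0 \<le> K \<and> 1 \<le> L \<and> (\<forall>s. sqrt (real (s + c)) ^ (s + c + 1) \<le> K * L ^ s * sqrt (real s) ^ s)"
proof (intro exI conjI allI)
  fix s
  have power_s: "real (s + c) ^ s \<le> exp c * real s ^ s"
  proof (cases "s = 0")
    case False
    have "(1 + real c / real s) ^ s \<le> exp c"
      using False by (intro exp_ge_one_plus_x_over_n_power_n) auto
    moreover have "real (s + c) ^ s = real s ^ s * (1 + real c / real s) ^ s"
      using False by (simp flip: power_mult_distrib add: field_simps)
    ultimately show ?thesis
      by (metis mult.commute mult_left_mono zero_le_power of_nat_0_le_iff)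
  qed simp
  have power_c: "real (s + c) ^ (c + 1) \<le> (2 ^ (c + 1)) ^ (s + c)"
  proof -
    have "real (s + c) \<le> 2 ^ (s + c)"
      by (metis less_exp less_imp_le of_nat_le_iff of_nat_numeral of_nat_power)
    then have "real (s + c) ^ (c + 1) \<le> (2 ^ (s + c)) ^ (c + 1)"
      by (intro power_mono) auto
    then show ?thesis
      by (metis power_mult mult.commute)
  qed
  have "real (s + c) ^ (s + c + 1) = real (s + c) ^ s * real (s + c) ^ (c + 1)"
    by (simp flip: power_add add: add.assoc)
  also have "\<dots> \<le> exp c * real s ^ s * (2 ^ (c + 1)) ^ (s + c)"
    using power_s power_c by (intro mult_mono) auto
  finally have "sqrt (real (s + c) ^ (s + c + 1))
      \<le> sqrt (exp c * real s ^ s * (2 ^ (c + 1)) ^ (s + c))"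
    by (rule real_sqrt_le_mono)
  then show "sqrt (real (s + c)) ^ (s + c + 1)
      \<le> sqrt (exp c * (2 ^ (c + 1)) ^ c) * sqrt (2 ^ (c + 1)) ^ s * sqrt (real s) ^ s"
    by (simp add: real_sqrt_mult real_sqrt_power power_add power_mult_distrib mult_ac)
qed (use one_le_power[of "2::real" "c + 1"] in simp_all)

lemma abs_power_mult_gauss_poly_le:
  fixes p :: "real poly"
  assumes "degree p \<le> N" "\<And>m. \<bar>coeff p m\<bar> \<le> A * R ^ (N - m)" "sqrt (real (a + N)) \<le> R"
  shows "\<bar>t ^ a * gauss_poly (1/2) p t\<bar> \<le> real (N + 1) * A * R ^ (a + N)"
proof -
  let ?e = "exp (- (1/2 * t\<^sup>2))"
  have "poly p t = (\<Sum>m\<le>N. coeff p m * t ^ m)"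
    unfolding poly_altdef using assms(1) by (intro sum.mono_neutral_left) (auto simp: coeff_eq_0)
  then have "\<bar>t ^ a * gauss_poly (1/2) p t\<bar> = \<bar>\<Sum>m\<le>N. coeff p m * (t ^ (a + m) * ?e)\<bar>"
    by (simp add: gauss_poly_def sum_distrib_left sum_distrib_right power_add mult_ac)
  also have "\<dots> \<le> (\<Sum>m\<le>N. \<bar>coeff p m\<bar> * (\<bar>t\<bar> ^ (a + m) * ?e))"
    by (rule order_trans[OF sum_abs]) (simp add: abs_mult power_abs)
  also have "\<dots> \<le> (\<Sum>m\<le>N. A * R ^ (a + N))"
  proof (rule sum_mono)
    fix m
    assume "m \<in> {..N}"
    then have "sqrt (real (a + m)) \<le> sqrt (real (a + N))"
      by simp
    then have "sqrt (real (a + m)) \<le> R"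
      using assms(3) by linarith
    then have "sqrt (real (a + m)) ^ (a + m) \<le> R ^ (a + m)"
      by (intro power_mono) auto
    then have "\<bar>t\<bar> ^ (a + m) * ?e \<le> R ^ (a + m)"
      using abs_power_mult_gauss_le[of t "a + m"] by linarith
    then have "\<bar>coeff p m\<bar> * (\<bar>t\<bar> ^ (a + m) * ?e) \<le> A * R ^ (N - m) * R ^ (a + m)"
      using assms(2)[of m] by (intro mult_mono) auto
    also have "\<dots> = A * R ^ (a + N)"
      using \<open>m \<in> {..N}\<close> by (simp flip: power_add mult.assoc add: add.commute)
    finally show "\<bar>coeff p m\<bar> * (\<bar>t\<bar> ^ (a + m) * ?e) \<le> A * R ^ (a + N)" .
  qed
  finally show ?thesis
    by simp
qed

text \<open>Since sqrt k ^ k = k^(k/2), these are the defining estimates of the Gelfand-Shilov space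
  S^(1/2)_(1/2), in one variable and on real^'d.\<close>

definition gelfand_shilov_half_1d :: "(real \<Rightarrow> real) \<Rightarrow> bool" where
  "gelfand_shilov_half_1d g \<longleftrightarrow> (\<exists>K L. 0 \<le> K \<and> 1 \<le> L \<and>
     (\<forall>a b t. \<bar>t ^ a * (deriv ^^ b) g t\<bar> \<le> K * L ^ (a + b) * sqrt (real (a + b)) ^ (a + b)))"

definition gelfand_shilov_half :: "(real^'d::finite \<Rightarrow> real) \<Rightarrow> bool" where
  "gelfand_shilov_half f \<longleftrightarrow> (\<exists>K L. 0 \<le> K \<and> 0 < L \<and>
     (\<forall>\<alpha> \<beta> x. \<bar>monom_pow x \<alpha> * mi_partial \<beta> f x\<bar>
        \<le> K * L ^ mi_abs (mi_add \<alpha> \<beta>) * mi_halfpow (mi_add \<alpha> \<beta>)))"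

lemma gelfand_shilov_half_1d_gauss_poly: "gelfand_shilov_half_1d (gauss_poly (1/2) q)"
proof -
  define n where "n = degree q"
  define K0 where "K0 = (\<Sum>i\<le>degree q. \<bar>coeff q i\<bar>)"
  have "0 \<le> K0"
    unfolding K0_def by (intro sum_nonneg) auto
  obtain K L where KL: "0 \<le> K" "1 \<le> L"
    and shift: "\<And>s. sqrt (real (s + (n + 1))) ^ (s + (n + 1) + 1) \<le> K * L ^ s * sqrt (real s) ^ s"
    using sqrt_power_shift_le by blast
  have "\<bar>t ^ a * (deriv ^^ b) (gauss_poly (1/2) q) t\<bar>
      \<le> K0 * K * (2 * L) ^ (a + b) * sqrt (real (a + b)) ^ (a + b)" for a b t
  proof -
    define R where "R = sqrt (real (a + b + (n + 1)))"
    have "1 \<le> R" "real (n + b) \<le> R\<^sup>2"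
      unfolding R_def by simp_all
    then have "\<And>m. \<bar>coeff ((gauss_pderiv (1/2) ^^ b) q) m\<bar> \<le> (K0 * 2 ^ b) * R ^ (n + b - m)"
      using abs_coeff_gauss_pderiv_half_iter_le unfolding K0_def n_def by (simp add: mult_ac)
    then have "\<bar>t ^ a * (deriv ^^ b) (gauss_poly (1/2) q) t\<bar>
        \<le> real (n + b + 1) * (K0 * 2 ^ b) * R ^ (a + (n + b))"
      unfolding higher_deriv_gauss_poly using degree_gauss_pderiv_iter[of b "1/2" q]
      by (intro abs_power_mult_gauss_poly_le) (simp_all add: R_def n_def)
    also have "\<dots> \<le> R\<^sup>2 * (K0 * 2 ^ b) * R ^ (a + (n + b))"
      using \<open>0 \<le> K0\<close> \<open>1 \<le> R\<close> by (intro mult_right_mono) (simp_all add: R_def)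
    also have "\<dots> = K0 * 2 ^ b * R ^ (a + b + (n + 1) + 1)"
      by (simp add: power_add power2_eq_square mult_ac)
    also have "\<dots> \<le> K0 * 2 ^ (a + b) * (K * L ^ (a + b) * sqrt (real (a + b)) ^ (a + b))"
      using shift[of "a + b"] \<open>0 \<le> K0\<close> unfolding R_def
      by (intro mult_mono) (auto intro: power_increasing)
    also have "\<dots> = K0 * K * (2 * L) ^ (a + b) * sqrt (real (a + b)) ^ (a + b)"
      by (simp add: power_mult_distrib mult_ac)
    finally show ?thesis .
  qed
  then show ?thesis
    unfolding gelfand_shilov_half_1d_def using \<open>0 \<le> K0\<close> KL
    by (intro exI[of _ "K0 * K"] exI[of _ "2 * L"]) auto
qed

lemma gelfand_shilov_half_tensor_prod:
  fixes g :: "'d::finite \<Rightarrow> real \<Rightarrow> real"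
  assumes "\<And>i. infinitely_differentiable (g i)" "\<And>i. gelfand_shilov_half_1d (g i)"
  shows "gelfand_shilov_half (tensor_prod c g)"
proof -
  obtain K L where KL: "\<And>i. 0 \<le> K i" "\<And>i. 1 \<le> L i"
    and bound: "\<And>i a b t. \<bar>t ^ a * (deriv ^^ b) (g i) t\<bar>
                  \<le> K i * L i ^ (a + b) * sqrt (real (a + b)) ^ (a + b)"
    using assms(2) unfolding gelfand_shilov_half_1d_def by metis
  define L0 where "L0 = (\<Prod>i\<in>UNIV. L i)"
  have "1 \<le> L0"
    unfolding L0_def using KL(2) by (intro prod_ge_1) auto
  have L_le: "L i \<le> L0" for i
  proof -
    have "1 \<le> (\<Prod>j\<in>UNIV - {i}. L j)"
      using KL(2) by (intro prod_ge_1) auto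
    then have "L i * 1 \<le> L i * (\<Prod>j\<in>UNIV - {i}. L j)"
      using KL(2)[of i] by (intro mult_left_mono) auto
    then show ?thesis
      unfolding L0_def by (simp add: prod.remove[of UNIV i])
  qed
  have "\<bar>monom_pow x \<alpha> * mi_partial \<beta> (tensor_prod c g) x\<bar>
      \<le> (\<bar>c\<bar> * (\<Prod>i\<in>UNIV. K i)) * L0 ^ mi_abs (mi_add \<alpha> \<beta>) * mi_halfpow (mi_add \<alpha> \<beta>)"
    for \<alpha> \<beta> x
  proof -
    have "\<bar>monom_pow x \<alpha> * mi_partial \<beta> (tensor_prod c g) x\<bar>
        = \<bar>c\<bar> * (\<Prod>i\<in>UNIV. \<bar>(x $ i) ^ \<alpha> i * (deriv ^^ \<beta> i) (g i) (x $ i)\<bar>)"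
      unfolding mi_partial_tensor_prod[OF assms(1)] tensor_prod_def monom_pow_def
      by (simp add: abs_mult prod.distrib abs_prod mult_ac)
    also have "\<dots> \<le> \<bar>c\<bar> *
        (\<Prod>i\<in>UNIV. K i * L0 ^ (\<alpha> i + \<beta> i) * sqrt (real (\<alpha> i + \<beta> i)) ^ (\<alpha> i + \<beta> i))"
    proof (intro mult_left_mono prod_mono conjI)
      fix i
      have "L i ^ (\<alpha> i + \<beta> i) \<le> L0 ^ (\<alpha> i + \<beta> i)"
        using KL(2)[of i] L_le[of i] by (intro power_mono) auto
      then show "\<bar>(x $ i) ^ \<alpha> i * (deriv ^^ \<beta> i) (g i) (x $ i)\<bar>
          \<le> K i * L0 ^ (\<alpha> i + \<beta> i) * sqrt (real (\<alpha> i + \<beta> i)) ^ (\<alpha> i + \<beta> i)"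
        using bound[where i = i and a = "\<alpha> i" and b = "\<beta> i" and t = "x $ i"] KL(1)[of i]
        by (meson order_trans mult_left_mono mult_right_mono mult_nonneg_nonneg zero_le_power
            real_sqrt_ge_zero of_nat_0_le_iff)
    qed auto
    also have "\<dots> = (\<bar>c\<bar> * (\<Prod>i\<in>UNIV. K i)) * L0 ^ mi_abs (mi_add \<alpha> \<beta>) * mi_halfpow (mi_add \<alpha> \<beta>)"
      unfolding mi_abs_def mi_add_def mi_halfpow_def power_sum real_sqrt_power prod.distrib
      by (simp add: mult_ac)
    finally show ?thesis .
  qed
  moreover have "0 \<le> \<bar>c\<bar> * (\<Prod>i\<in>UNIV. K i)"
    using KL(1) by (simp add: prod_nonneg)
  ultimately show ?thesis
    unfolding gelfand_shilov_half_def using \<open>1 \<le> L0\<close> by (meson less_le_trans zero_less_one)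
qed

lemma exp_mult_norm_sq_eq_tensor_prod:
  "exp (a * (norm x)\<^sup>2) = tensor_prod 1 (\<lambda>i t. exp (a * t\<^sup>2)) (x :: real^'d::finite)"
proof -
  have "(norm x)\<^sup>2 = (\<Sum>i\<in>UNIV. (x $ i)\<^sup>2)"
    unfolding power2_norm_eq_inner inner_vec_def by (simp add: power2_eq_square)
  then show ?thesis
    by (simp add: tensor_prod_def sum_distrib_left exp_sum)
qed

lemma hermite_fun_eq_tensor_prod:
  fixes \<gamma> :: "'d::finite \<Rightarrow> nat"
  obtains c P where "hermite_fun \<gamma> = tensor_prod c (\<lambda>i. gauss_poly (1/2) (P i))"
proof
  define P where "P i = (gauss_pderiv 1 ^^ \<gamma> i) 1" for i
  have "(\<lambda>y::real^'d. exp (- (norm y)\<^sup>2)) = tensor_prod 1 (\<lambda>i. gauss_poly 1 1)"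
  proof
    fix y :: "real^'d"
    show "exp (- (norm y)\<^sup>2) = tensor_prod 1 (\<lambda>i. gauss_poly 1 1) y"
      using exp_mult_norm_sq_eq_tensor_prod[of "-1" y] by (simp add: gauss_poly_def [abs_def])
  qed
  then have partial_gauss:
    "mi_partial \<gamma> (\<lambda>y::real^'d. exp (- (norm y)\<^sup>2)) = tensor_prod 1 (\<lambda>i. gauss_poly 1 (P i))"
    by (simp add: mi_partial_tensor_prod infinitely_differentiable_gauss_poly
        higher_deriv_gauss_poly P_def)
  have half: "gauss_poly 1 p t * exp (1/2 * t\<^sup>2) = gauss_poly (1/2) p t" for p t
    by (simp add: gauss_poly_def mult.assoc flip: exp_add)
  have "tensor_prod 1 (\<lambda>i. gauss_poly 1 (P i)) x * exp (1/2 * (norm x)\<^sup>2)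
      = tensor_prod 1 (\<lambda>i. gauss_poly (1/2) (P i)) x" for x :: "real^'d"
    using exp_mult_norm_sq_eq_tensor_prod[of "1/2" x] half
    by (simp add: tensor_prod_def flip: prod.distrib)
  moreover have "exp ((norm x)\<^sup>2) * exp (- (norm x)\<^sup>2 / 2) = exp (1/2 * (norm x)\<^sup>2)"
    for x :: "real^'d"
    by (simp flip: exp_add)
  moreover define c where
    "c = (2 ^ mi_abs \<gamma> * mi_fact \<gamma> * pi powr (real CARD('d) / 2)) powr (-1/2) * (-1) ^ mi_abs \<gamma>"
  moreover have "hermite_fun \<gamma> x = c * (tensor_prod 1 (\<lambda>i. gauss_poly 1 (P i)) x
      * (exp ((norm x)\<^sup>2) * exp (- (norm x)\<^sup>2 / 2)))" for x
    unfolding hermite_fun_def hermite_poly_def partial_gauss c_def by (simp only: mult_ac)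
  ultimately have "hermite_fun \<gamma> x = tensor_prod c (\<lambda>i. gauss_poly (1/2) (P i)) x" for x
    by (simp add: tensor_prod_def)
  then show "hermite_fun \<gamma> = tensor_prod c (\<lambda>i. gauss_poly (1/2) (P i))" ..
qed

lemma smooth_fun_hermite_fun: "smooth_fun (hermite_fun \<gamma>)"
proof -
  obtain c P where "hermite_fun \<gamma> = tensor_prod c (\<lambda>i. gauss_poly (1/2) (P i))"
    by (rule hermite_fun_eq_tensor_prod)
  then show ?thesis
    by (simp add: smooth_fun_tensor_prod infinitely_differentiable_gauss_poly)
qed

lemma gelfand_shilov_half_hermite_fun: "gelfand_shilov_half (hermite_fun \<gamma>)"
proof -
  obtain c P where "hermite_fun \<gamma> = tensor_prod c (\<lambda>i. gauss_poly (1/2) (P i))"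
    by (rule hermite_fun_eq_tensor_prod)
  then show ?thesis
    by (simp add: gelfand_shilov_half_tensor_prod infinitely_differentiable_gauss_poly
        gelfand_shilov_half_1d_gauss_poly)
qed

lemma norm_finite_if_gelfand_shilov_half_estimate:
  fixes f :: "real^'d::finite \<Rightarrow> real"
  assumes f: "\<And>\<alpha> \<beta> x. \<bar>monom_pow x \<alpha> * mi_partial \<beta> f x\<bar>
                 \<le> K * L ^ mi_abs (mi_add \<alpha> \<beta>) * mi_halfpow (mi_add \<alpha> \<beta>)"
    and M: "\<And>\<alpha>. mi_halfpow \<alpha> \<le> B * h ^ mi_abs \<alpha> * Mseq \<alpha>" "\<And>\<alpha>. 0 < Mseq \<alpha>"
    and "0 \<le> K" "0 < L" "0 < h"
  shows "norm_finite Mseq (L * h) f"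
  unfolding norm_finite_def
proof (intro exI allI)
  fix \<alpha> \<beta> :: "'d \<Rightarrow> nat" and x
  let ?n = "mi_abs (mi_add \<alpha> \<beta>)"
  have "\<bar>monom_pow x \<alpha> * mi_partial \<beta> f x\<bar> \<le> K * L ^ ?n * (B * h ^ ?n * Mseq (mi_add \<alpha> \<beta>))"
    using f M(1) \<open>0 \<le> K\<close> \<open>0 < L\<close>
    by (meson order_trans mult_left_mono mult_nonneg_nonneg zero_le_power less_imp_le)
  also have "\<dots> = K * B * ((L * h) ^ ?n * Mseq (mi_add \<alpha> \<beta>))"
    by (simp add: power_mult_distrib mult_ac)
  finally show "\<bar>monom_pow x \<alpha> * mi_partial \<beta> f x\<bar> / ((L * h) ^ ?n * Mseq (mi_add \<alpha> \<beta>))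
      \<le> K * B"
    using M(2) \<open>0 < L\<close> \<open>0 < h\<close> by (simp add: divide_le_eq)
qed

lemma gelfand_shilov_half_in_S_roumieu:
  assumes "smooth_fun f" "gelfand_shilov_half f" "weight_matrix M"
    and "\<exists>kap>0. \<exists>B. \<exists>h>0. \<forall>\<alpha>. mi_halfpow \<alpha> \<le> B * h ^ mi_abs \<alpha> * M kap \<alpha>"
  shows "f \<in> S_roumieu M"
proof -
  obtain K L where "0 \<le> K" "0 < L"
    and f: "\<And>\<alpha> \<beta> x. \<bar>monom_pow x \<alpha> * mi_partial \<beta> f x\<bar>
                 \<le> K * L ^ mi_abs (mi_add \<alpha> \<beta>) * mi_halfpow (mi_add \<alpha> \<beta>)"
    using assms(2) unfolding gelfand_shilov_half_def by blast
  obtain kap B h where "0 < kap" "0 < h"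
    and M: "\<And>\<alpha>. mi_halfpow \<alpha> \<le> B * h ^ mi_abs \<alpha> * M kap \<alpha>"
    using assms(4) by blast
  have "\<And>\<alpha>. 0 < M kap \<alpha>"
    using assms(3) \<open>0 < kap\<close> unfolding weight_matrix_def by blast
  then have "norm_finite (M kap) (L * h) f"
    using norm_finite_if_gelfand_shilov_half_estimate[OF f M] \<open>0 \<le> K\<close> \<open>0 < L\<close> \<open>0 < h\<close> by blast
  moreover have "0 < L * h"
    using \<open>0 < L\<close> \<open>0 < h\<close> by simp
  ultimately show ?thesis
    unfolding S_roumieu_def using assms(1) \<open>0 < kap\<close> by blast
qed

lemma gelfand_shilov_half_in_S_beurling:
  assumes "smooth_fun f" "gelfand_shilov_half f" "weight_matrix M"
    and "\<forall>lam>0. \<forall>h>0. \<exists>B. \<forall>\<alpha>. mi_halfpow \<alpha> \<le> B * h ^ mi_abs \<alpha> * M lam \<alpha>"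
  shows "f \<in> S_beurling M"
proof -
  obtain K L where "0 \<le> K" "0 < L"
    and f: "\<And>\<alpha> \<beta> x. \<bar>monom_pow x \<alpha> * mi_partial \<beta> f x\<bar>
                 \<le> K * L ^ mi_abs (mi_add \<alpha> \<beta>) * mi_halfpow (mi_add \<alpha> \<beta>)"
    using assms(2) unfolding gelfand_shilov_half_def by blast
  have "norm_finite (M lam) h f" if "0 < lam" "0 < h" for lam h
  proof -
    have "0 < h / L"
      using \<open>0 < h\<close> \<open>0 < L\<close> by simp
    then obtain B where M: "\<And>\<alpha>. mi_halfpow \<alpha> \<le> B * (h / L) ^ mi_abs \<alpha> * M lam \<alpha>"
      using assms(4) \<open>0 < lam\<close> by blast
    have "\<And>\<alpha>. 0 < M lam \<alpha>"
      using assms(3) \<open>0 < lam\<close> unfolding weight_matrix_def by blast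
    then have "norm_finite (M lam) (L * (h / L)) f"
      using norm_finite_if_gelfand_shilov_half_estimate[OF f M] \<open>0 \<le> K\<close> \<open>0 < L\<close> \<open>0 < h\<close> by simp
    then show ?thesis
      using \<open>0 < L\<close> by simp
  qed
  then show ?thesis
    unfolding S_beurling_def using assms(1) by blast
qed

lemma mi_add_mi_zero [simp]: "mi_add \<alpha> mi_zero = \<alpha>"
  by (simp add: mi_add_def mi_zero_def)

lemma halfpow_bound_if_roumieu_condition:
  assumes "weight_matrix M"
    and "\<forall>lam>0. \<exists>kap\<ge>lam. \<exists>B>0. \<exists>C>0. \<exists>H>0. \<forall>\<alpha> \<beta>.
           mi_halfpow \<alpha> * M lam \<beta> \<le> B * C ^ mi_abs \<alpha> * H ^ mi_abs (mi_add \<alpha> \<beta>) * M kap (mi_add \<alpha> \<beta>)"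
  shows "\<exists>kap>0. \<exists>B. \<exists>h>0. \<forall>\<alpha>. mi_halfpow \<alpha> \<le> B * h ^ mi_abs \<alpha> * M kap \<alpha>"
proof -
  obtain kap B C H where "1 \<le> kap" "0 < C" "0 < H"
    and R1: "\<And>\<alpha> \<beta>. mi_halfpow \<alpha> * M 1 \<beta>
               \<le> B * C ^ mi_abs \<alpha> * H ^ mi_abs (mi_add \<alpha> \<beta>) * M kap (mi_add \<alpha> \<beta>)"
    using assms(2)[rule_format, OF zero_less_one] by blast
  have "M 1 mi_zero = 1"
    using assms(1) unfolding weight_matrix_def by simp
  then have bound: "mi_halfpow \<alpha> \<le> B * (C * H) ^ mi_abs \<alpha> * M kap \<alpha>" for \<alpha>
    using R1[of \<alpha> mi_zero] by (simp add: power_mult_distrib mult_ac)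
  show ?thesis
  proof (intro exI conjI)
    show "0 < kap"
      using \<open>1 \<le> kap\<close> by simp
    show "0 < C * H"
      using \<open>0 < C\<close> \<open>0 < H\<close> by simp
    show "\<forall>\<alpha>. mi_halfpow \<alpha> \<le> B * (C * H) ^ mi_abs \<alpha> * M kap \<alpha>"
      using bound by blast
  qed
qed

lemma halfpow_bound_if_beurling_condition:
  assumes "weight_matrix M"
    and "\<forall>lam>0. \<exists>kap. 0 < kap \<and> kap \<le> lam \<and> (\<exists>H>0. \<forall>C>0. \<exists>B>0. \<forall>\<alpha> \<beta>.
           mi_halfpow \<alpha> * M kap \<beta> \<le> B * C ^ mi_abs \<alpha> * H ^ mi_abs (mi_add \<alpha> \<beta>) * M lam (mi_add \<alpha> \<beta>))"
  shows "\<forall>lam>0. \<forall>h>0. \<exists>B. \<forall>\<alpha>. mi_halfpow \<alpha> \<le> B * h ^ mi_abs \<alpha> * M lam \<alpha>"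
proof (intro allI impI)
  fix lam h :: real
  assume "0 < lam" "0 < h"
  obtain kap H where "0 < kap" "0 < H"
    and B1: "\<And>C. 0 < C \<Longrightarrow> \<exists>B>0. \<forall>\<alpha> \<beta>.
           mi_halfpow \<alpha> * M kap \<beta> \<le> B * C ^ mi_abs \<alpha> * H ^ mi_abs (mi_add \<alpha> \<beta>) * M lam (mi_add \<alpha> \<beta>)"
    using assms(2)[rule_format, OF \<open>0 < lam\<close>] by blast
  obtain B where B: "\<And>\<alpha> \<beta>.
      mi_halfpow \<alpha> * M kap \<beta> \<le> B * (h / H) ^ mi_abs \<alpha> * H ^ mi_abs (mi_add \<alpha> \<beta>) * M lam (mi_add \<alpha> \<beta>)"
    using B1[of "h / H"] \<open>0 < h\<close> \<open>0 < H\<close> by auto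
  have "M kap mi_zero = 1"
    using assms(1) \<open>0 < kap\<close> unfolding weight_matrix_def by simp
  then have "mi_halfpow \<alpha> \<le> B * h ^ mi_abs \<alpha> * M lam \<alpha>" for \<alpha>
    using B[of \<alpha> mi_zero] \<open>0 < H\<close> by (simp add: power_divide mult_ac)
  then show "\<exists>B. \<forall>\<alpha>. mi_halfpow \<alpha> \<le> B * h ^ mi_abs \<alpha> * M lam \<alpha>"
    by blast
qed

theorem proposition4p6:
  fixes M :: "real \<Rightarrow> ('d::finite \<Rightarrow> nat) \<Rightarrow> real"
  assumes wm: "weight_matrix M"
  shows
   "((\<forall>lam>0. \<exists>kap\<ge>lam. \<exists>B>0. \<exists>C>0. \<exists>H>0. \<forall>\<alpha> \<beta>.
         mi_halfpow \<alpha> * M lam \<beta> \<le> B * C ^ mi_abs \<alpha> * H ^ mi_abs (mi_add \<alpha> \<beta>) * M kap (mi_add \<alpha> \<beta>)) \<and>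
     (\<forall>lam>0. \<exists>kap\<ge>lam. \<exists>A\<ge>1. \<forall>\<alpha> j.
         M lam (mi_add \<alpha> (mi_unit j)) \<le> A ^ (mi_abs \<alpha> + 1) * M kap \<alpha>)
     \<longrightarrow> (\<forall>\<gamma>. hermite_fun \<gamma> \<in> S_roumieu M))
  \<and>
   ((\<forall>lam>0. \<exists>kap. 0 < kap \<and> kap \<le> lam \<and> (\<exists>H>0. \<forall>C>0. \<exists>B>0. \<forall>\<alpha> \<beta>.
         mi_halfpow \<alpha> * M kap \<beta> \<le> B * C ^ mi_abs \<alpha> * H ^ mi_abs (mi_add \<alpha> \<beta>) * M lam (mi_add \<alpha> \<beta>))) \<and>
     (\<forall>lam>0. \<exists>kap. 0 < kap \<and> kap \<le> lam \<and> (\<exists>A\<ge>1. \<forall>\<alpha> j.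
         M kap (mi_add \<alpha> (mi_unit j)) \<le> A ^ (mi_abs \<alpha> + 1) * M lam \<alpha>))
     \<longrightarrow> (\<forall>\<gamma>. hermite_fun \<gamma> \<in> S_beurling M))"
  by (intro conjI impI allI; elim conjE)
    (erule gelfand_shilov_half_in_S_roumieu [OF smooth_fun_hermite_fun
          gelfand_shilov_half_hermite_fun wm halfpow_bound_if_roumieu_condition [OF wm]]
        gelfand_shilov_half_in_S_beurling [OF smooth_fun_hermite_fun
          gelfand_shilov_half_hermite_fun wm halfpow_bound_if_beurling_condition [OF wm]])+

end
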